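(* In every identically ordered instance in which $n$ agents with equal responsibilities have additive disvaluations over chores $e_1,\ldots,e_m$ (with $c_i(e_j)\ge c_i(e_k)$ for all agents $i$ and all $j<k$), the allocation produced by AlgChores gives every agent $i$ a bundle of disvalue at most $\frac{4n-1}{3n}APS_i$.
   Context: $APS_i=\max_p\min\{c_i(S):\sum_{e\in S}p_e\ge1/n\}$ over nonnegative price vectors summing to $1$. AlgChores (on identically ordered instances): start with empty bundles $B_1,\ldots,B_n$; for $r=1,\ldots,m$, add chore $e_r$ to the bundle of an agent who envies no other agent (agent $i$ envies $j$ if $c_i(B_i)>c_i(B_j)$), and then, while the envy graph contains a cycle, rotate the bundles along the cycle so that each agent on it receives the bundle she envied. *)

theory Defs
  imports Main "HOL.Real"
begin

text \<open>Agents are 0..<n, chores are 0..<m (chore index r stands for e_{r+1}).\<close>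

definition cost :: "(nat \<Rightarrow> real) \<Rightarrow> nat set \<Rightarrow> real" where
  "cost v S = (\<Sum>e\<in>S. v e)"

definition APS :: "nat \<Rightarrow> nat \<Rightarrow> (nat \<Rightarrow> real) \<Rightarrow> real" where
  "APS n m v = Sup { Min { cost v S | S. S \<subseteq> {..<m} \<and> (\<Sum>e\<in>S. p e) \<ge> 1 / real n }
                   | p. (\<forall>e<m. p e \<ge> 0) \<and> (\<Sum>e<m. p e) = 1 }"

definition envies :: "(nat \<Rightarrow> nat \<Rightarrow> real) \<Rightarrow> (nat \<Rightarrow> nat set) \<Rightarrow> nat \<Rightarrow> nat \<Rightarrow> bool" where
  "envies c B i j \<longleftrightarrow> cost (c i) (B i) > cost (c i) (B j)"

definition envy_cycle :: "nat \<Rightarrow> (nat \<Rightarrow> nat \<Rightarrow> real) \<Rightarrow> (nat \<Rightarrow> nat set) \<Rightarrow> nat list \<Rightarrow> bool" where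
  "envy_cycle n c B cyc \<longleftrightarrow> cyc \<noteq> [] \<and> distinct cyc \<and> set cyc \<subseteq> {..<n} \<and>
     (\<forall>t<length cyc. envies c B (cyc ! t) (cyc ! ((t + 1) mod length cyc)))"

text \<open>Rotating bundles along the cycle: each agent on it receives the bundle she envied.\<close>
definition rotate_along :: "nat list \<Rightarrow> (nat \<Rightarrow> nat set) \<Rightarrow> (nat \<Rightarrow> nat set)" where
  "rotate_along cyc B = (\<lambda>a. if a \<in> set cyc
       then B (cyc ! (((THE t. t < length cyc \<and> cyc ! t = a) + 1) mod length cyc))
       else B a)"

text \<open>Reachable states of AlgChores: alg_state n m c r B means that after handling
  chores 0..<r (possibly in the middle of the cycle-elimination loop) the allocation is B.
  A new chore is only added once no envy cycle remains (the while loop has terminated),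
  and it goes to an agent who envies no other agent.  Choices are arbitrary.\<close>
inductive alg_state :: "nat \<Rightarrow> nat \<Rightarrow> (nat \<Rightarrow> nat \<Rightarrow> real) \<Rightarrow> nat \<Rightarrow> (nat \<Rightarrow> nat set) \<Rightarrow> bool"
  for n m c where
  init: "alg_state n m c 0 (\<lambda>_. {})"
| add: "\<lbrakk> alg_state n m c r B; r < m; \<not> (\<exists>cyc. envy_cycle n c B cyc); i < n;
          \<forall>j<n. \<not> envies c B i j \<rbrakk>
        \<Longrightarrow> alg_state n m c (Suc r) (B(i := insert r (B i)))"
| rot: "\<lbrakk> alg_state n m c r B; envy_cycle n c B cyc \<rbrakk>
        \<Longrightarrow> alg_state n m c r (rotate_along cyc B)"

definition algchores_output :: "nat \<Rightarrow> nat \<Rightarrow> (nat \<Rightarrow> nat \<Rightarrow> real) \<Rightarrow> (nat \<Rightarrow> nat set) \<Rightarrow> bool" where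
  "algchores_output n m c B \<longleftrightarrow> alg_state n m c m B \<and> \<not> (\<exists>cyc. envy_cycle n c B cyc)"

end

theory Submission
  imports Defs
begin

(*
  The bound holds in every reachable state of AlgChores, by induction over the run. Rotating
  along an envy cycle keeps the bundles a partition of the chores handled so far and only
  lowers the disvalue of the agents on the cycle. When chore r (the (r+1)-st most costly)
  is given to agent i, she envies nobody, so B_i is her cheapest bundle. Two price vectors
  bound APS_i from below: prices proportional to c_i give c_i(M) <= n APS_i, and price 1 on
  the chores 0..r, doubled on the first 2n - r of them, gives APS_i >= 3 c_i(r) or
  (if r < 2n) APS_i >= c_i(2n-r-1) + c_i(r). In the first case
  n c_i(B_i) + c_i(r) <= c_i(M) <= n APS_i together with 3 c_i(r) <= APS_i yields the
  factor (4n-1)/(3n). In the second case only r < 2n chores are allocated, so by pigeonhole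
  some bundle is empty or a single chore no more costly than chore 2n-r-1, and
  c_i(B_i) + c_i(r) <= APS_i. For r < n some bundle is empty, so c_i(B_i) = 0.
*)

lemma cost_nonneg: "(\<And>e. e \<in> S \<Longrightarrow> 0 \<le> v e) \<Longrightarrow> 0 \<le> cost v S"
  unfolding cost_def by (rule sum_nonneg)

lemma cost_mono: "T \<subseteq> S \<Longrightarrow> finite S \<Longrightarrow> (\<And>e. e \<in> S \<Longrightarrow> 0 \<le> v e) \<Longrightarrow> cost v T \<le> cost v S"
  unfolding cost_def by (rule sum_mono2) auto

lemma APS_ge_price_vector:
  assumes n: "1 \<le> n" and p0: "\<forall>e<m. 0 \<le> p e" and p1: "(\<Sum>e<m. p e) = 1"
    and L: "\<And>S. S \<subseteq> {..<m} \<Longrightarrow> 1 / real n \<le> (\<Sum>e\<in>S. p e) \<Longrightarrow> L \<le> cost v S"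
  shows "L \<le> APS n m v"
proof -
  define shares where
    "shares q = {cost v S | S. S \<subseteq> {..<m} \<and> 1 / real n \<le> (\<Sum>e\<in>S. q e)}" for q :: "nat \<Rightarrow> real"
  have fin: "finite (shares q)" for q
    by (rule finite_subset[of _ "cost v ` Pow {..<m}"]) (auto simp: shares_def)
  have whole: "cost v {..<m} \<in> shares q" if "(\<Sum>e<m. q e) = 1" for q
    using that n unfolding shares_def by auto
  have "L \<le> Min (shares p)"
    using fin whole[OF p1] L unfolding shares_def by (subst Min_ge_iff) auto
  also have "Min (shares p) \<le> Sup {Min (shares q) | q. (\<forall>e<m. 0 \<le> q e) \<and> (\<Sum>e<m. q e) = 1}"
  proof (rule cSup_upper)
    show "Min (shares p) \<in> {Min (shares q) | q. (\<forall>e<m. 0 \<le> q e) \<and> (\<Sum>e<m. q e) = 1}"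
      using p0 p1 by blast
    show "bdd_above {Min (shares q) | q. (\<forall>e<m. 0 \<le> q e) \<and> (\<Sum>e<m. q e) = 1}"
      using Min_le[OF fin whole] by (auto intro!: bdd_aboveI[of _ "cost v {..<m}"])
  qed
  finally show ?thesis unfolding APS_def shares_def by simp
qed

lemma APS_ge_weighted:
  assumes n: "1 \<le> n" and w0: "\<forall>e<m. 0 \<le> w e" and W: "0 < (\<Sum>e<m. w e)"
    and L: "\<And>S. S \<subseteq> {..<m} \<Longrightarrow> (\<Sum>e<m. w e) \<le> real n * (\<Sum>e\<in>S. w e) \<Longrightarrow> L \<le> cost v S"
  shows "L \<le> APS n m v"
proof (rule APS_ge_price_vector[OF n, where p = "\<lambda>e. w e / (\<Sum>e<m. w e)"])
  show "\<forall>e<m. 0 \<le> w e / (\<Sum>e<m. w e)" using w0 W by simp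
  show "(\<Sum>e<m. w e / (\<Sum>e<m. w e)) = 1" using W by (simp add: sum_divide_distrib[symmetric])
  fix S assume "S \<subseteq> {..<m}" and "1 / real n \<le> (\<Sum>e\<in>S. w e / (\<Sum>e<m. w e))"
  then show "L \<le> cost v S"
    using L W n by (simp add: sum_divide_distrib[symmetric] field_simps)
qed

lemma APS_ge_chore:
  assumes n: "1 \<le> n" and r: "r < m" and v0: "\<forall>e<m. 0 \<le> v e"
  shows "v r \<le> APS n m v"
proof (rule APS_ge_weighted[OF n, where w = "\<lambda>e. of_bool (e = r)"])
  show "\<forall>e<m. 0 \<le> (of_bool (e = r) :: real)" by simp
  show "0 < (\<Sum>e<m. of_bool (e = r) :: real)" using r by simp
  fix S assume S: "S \<subseteq> {..<m}" and "(\<Sum>e<m. of_bool (e = r)) \<le> real n * (\<Sum>e\<in>S. of_bool (e = r))"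
  moreover have "(\<Sum>e\<in>S. of_bool (e = r) :: real) = 0" if "r \<notin> S"
    using that by (intro sum.neutral) auto
  ultimately have "r \<in> S" using r by force
  then show "v r \<le> cost v S"
    using cost_mono[of "{r}" S v] S v0 finite_subset by (auto simp: cost_def)
qed

lemma APS_ge_average:
  assumes n: "1 \<le> n" and m: "1 \<le> m" and v0: "\<forall>e<m. 0 \<le> v e"
  shows "cost v {..<m} \<le> real n * APS n m v"
proof (cases "cost v {..<m} = 0")
  case True
  then show ?thesis using APS_ge_chore[OF n _ v0, of 0] m v0 by force
next
  case False
  then have pos: "0 < (\<Sum>e<m. v e)" using v0 cost_nonneg[of "{..<m}" v] by (simp add: cost_def)
  have "cost v {..<m} / real n \<le> APS n m v"
    by (rule APS_ge_weighted[OF n v0 pos]) (use n in \<open>simp add: cost_def field_simps\<close>)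
  then show ?thesis using n by (simp add: field_simps)
qed

lemma cost_ge_triple_or_pair:
  assumes S: "S \<subseteq> {..<m}" and KR: "K \<le> r" and r: "r < m" and v0: "\<forall>e<m. 0 \<le> v e"
    and dec: "\<And>j k. j \<le> k \<Longrightarrow> k < m \<Longrightarrow> v k \<le> v j"
    and big: "3 \<le> card (S \<inter> {e. e \<le> r}) + card (S \<inter> {e. e < K})"
  shows "3 * v r \<le> cost v S \<or> (0 < K \<and> v (K - 1) + v r \<le> cost v S)"
proof (cases "S \<inter> {e. e < K} = {}")
  case True
  then have three: "3 \<le> card (S \<inter> {e. e \<le> r})" using big by simp
  have "real (card (S \<inter> {e. e \<le> r})) * v r \<le> cost v (S \<inter> {e. e \<le> r})"
    unfolding cost_def by (rule sum_bounded_below) (use dec r in auto)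
  also have "\<dots> \<le> cost v S" using S v0 finite_subset by (intro cost_mono) auto
  finally have "3 * v r \<le> cost v S"
    using three v0 r mult_right_mono[of 3 "real (card (S \<inter> {e. e \<le> r}))" "v r"] by simp
  then show ?thesis ..
next
  case False
  then obtain e1 where e1: "e1 \<in> S" "e1 < K" by blast
  have fS: "finite S" using S finite_subset by blast
  have "card (S \<inter> {e. e < K}) \<le> card (S \<inter> {e. e \<le> r})"
    using KR fS by (intro card_mono) auto
  then have "\<not> S \<inter> {e. e \<le> r} \<subseteq> {e1}"
    using big card_mono[of "{e1}" "S \<inter> {e. e \<le> r}"] by auto
  then obtain e2 where e2: "e2 \<in> S" "e2 \<le> r" "e1 \<noteq> e2" by blast
  have "v (K - 1) + v r \<le> v e1 + v e2" using dec e1 e2 KR r by (simp add: add_mono)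
  also have "\<dots> = cost v {e1, e2}" using e2 by (simp add: cost_def)
  also have "\<dots> \<le> cost v S" using S e1 e2 v0 fS by (intro cost_mono) auto
  finally show ?thesis using e1 by simp
qed

lemma APS_ge_triple_or_pair:
  assumes n: "1 \<le> n" and nr: "n \<le> r" and r: "r < m" and v0: "\<forall>e<m. 0 \<le> v e"
    and dec: "\<And>j k. j \<le> k \<Longrightarrow> k < m \<Longrightarrow> v k \<le> v j"
  shows "3 * v r \<le> APS n m v \<or> (r < 2 * n \<and> v (2 * n - r - 1) + v r \<le> APS n m v)"
proof -
  define K where "K = 2 * n - r"
  have KR: "K \<le> r" using nr unfolding K_def by simp
  \<comment> \<open>The total weight is at least 2n + 1, so a share of price at least 1/n has weight at least 3.\<close>
  define w :: "nat \<Rightarrow> real" where "w e = of_bool (e \<le> r) + of_bool (e < K)" for e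
  have wsum: "(\<Sum>e\<in>S. w e) = real (card (S \<inter> {e. e \<le> r}) + card (S \<inter> {e. e < K}))"
    if "finite S" for S
    using that by (simp add: w_def sum.distrib)
  define L where "L = (if K = 0 then 3 * v r else min (3 * v r) (v (K - 1) + v r))"
  have "L \<le> APS n m v"
  proof (rule APS_ge_weighted[OF n])
    show "\<forall>e<m. 0 \<le> w e" by (simp add: w_def)
    have "{..<m} \<inter> {e. e \<le> r} = {..r}" "{..<m} \<inter> {e. e < K} = {..<K}" using r KR by auto
    then have total: "(\<Sum>e<m. w e) = real (r + 1 + K)" using wsum[of "{..<m}"] by simp
    then show "0 < (\<Sum>e<m. w e)" by simp
    fix S assume S: "S \<subseteq> {..<m}" and "(\<Sum>e<m. w e) \<le> real n * (\<Sum>e\<in>S. w e)"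
    then have "real (r + 1 + K) \<le> real n * real (card (S \<inter> {e. e \<le> r}) + card (S \<inter> {e. e < K}))"
      using wsum[of S] finite_subset[OF S] total by simp
    moreover have "2 * n \<le> r + K" unfolding K_def by simp
    ultimately have "real n * 2 < real n * real (card (S \<inter> {e. e \<le> r}) + card (S \<inter> {e. e < K}))"
      by linarith
    then have "3 \<le> card (S \<inter> {e. e \<le> r}) + card (S \<inter> {e. e < K})" using n by simp
    then show "L \<le> cost v S"
      using cost_ge_triple_or_pair[OF S KR r v0 dec] unfolding L_def by auto
  qed
  then show ?thesis unfolding L_def K_def by (auto simp: min_def split: if_splits)
qed

definition allocation_of :: "nat \<Rightarrow> (nat \<Rightarrow> nat set) \<Rightarrow> nat set \<Rightarrow> bool" where
  "allocation_of n B S \<longleftrightarrow>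
     (\<forall>a<n. \<forall>b<n. a \<noteq> b \<longrightarrow> B a \<inter> B b = {}) \<and> (\<Union>a<n. B a) = S"

lemma allocation_of_subset: "allocation_of n B S \<Longrightarrow> j < n \<Longrightarrow> B j \<subseteq> S"
  unfolding allocation_of_def by blast

lemma allocation_of_empty: "allocation_of n (\<lambda>_. {}) {}"
  by (simp add: allocation_of_def)

lemma allocation_of_insert:
  assumes B: "allocation_of n B S" and i: "i < n" and x: "x \<notin> S"
  shows "allocation_of n (B(i := insert x (B i))) (insert x S)"
proof -
  have "x \<notin> B a" if "a < n" for a using B x that unfolding allocation_of_def by blast
  moreover have "(\<Union>a<n. (B(i := insert x (B i))) a) = insert x (\<Union>a<n. B a)"
    using i by (auto split: if_splits)
  ultimately show ?thesis using B unfolding allocation_of_def by auto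
qed

lemma allocation_of_permute:
  assumes B: "allocation_of n B S" and \<sigma>: "bij_betw \<sigma> {..<n} {..<n}"
  shows "allocation_of n (B \<circ> \<sigma>) S"
  unfolding allocation_of_def
proof (intro conjI allI impI)
  fix a b assume "a < n" "b < n" "a \<noteq> b"
  then have "\<sigma> a \<noteq> \<sigma> b" "\<sigma> a < n" "\<sigma> b < n"
    using \<sigma> unfolding bij_betw_def inj_on_def by auto
  then show "(B \<circ> \<sigma>) a \<inter> (B \<circ> \<sigma>) b = {}"
    using B unfolding allocation_of_def by simp
next
  have "(\<Union>a<n. B (\<sigma> a)) = (\<Union>b\<in>\<sigma> ` {..<n}. B b)" by simp
  also have "\<dots> = S" using B bij_betw_imp_surj_on[OF \<sigma>] unfolding allocation_of_def by simp
  finally show "(\<Union>a<n. (B \<circ> \<sigma>) a) = S" by simp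
qed

lemma sum_allocation_of:
  assumes B: "allocation_of n B S" and S: "finite S"
  shows "(\<Sum>a<n. \<Sum>e\<in>B a. g e) = (\<Sum>e\<in>S. g e)"
proof -
  have "finite (B a)" if "a < n" for a
    using allocation_of_subset[OF B that] S by (rule finite_subset)
  then have "(\<Sum>e\<in>(\<Union>a<n. B a). g e) = (\<Sum>a<n. \<Sum>e\<in>B a. g e)"
    using B unfolding allocation_of_def by (intro sum.UNION_disjoint) auto
  then show ?thesis using B unfolding allocation_of_def by simp
qed

lemma card_allocation_of:
  "allocation_of n B S \<Longrightarrow> finite S \<Longrightarrow> (\<Sum>a<n. card (B a)) = card S"
  using sum_allocation_of[of n B S "\<lambda>_. 1::nat"] by simp

lemma allocation_has_small_bundle:
  assumes B: "allocation_of n B {..<r}" and r: "r < 2 * n"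
  shows "\<exists>j<n. B j = {} \<or> (\<exists>e. B j = {e} \<and> 2 * n - r - 1 \<le> e)"
proof (rule ccontr)
  assume "\<not> ?thesis"
  then have nonempty: "B j \<noteq> {}" and singleton: "B j = {e} \<Longrightarrow> e < 2 * n - r - 1"
    if "j < n" for j e
    using that by auto
  have finB: "finite (B j)" if "j < n" for j
    using allocation_of_subset[OF B that] by (rule finite_subset) simp
  define J where "J = {j \<in> {..<n}. card (B j) = 1}"
  have "card J = card (\<Union>j\<in>J. B j)"
    using B finB unfolding allocation_of_def J_def by (subst card_UN_disjoint) auto
  also have "\<dots> \<le> card {..<2 * n - r - 1}"
  proof (rule card_mono)
    show "(\<Union>j\<in>J. B j) \<subseteq> {..<2 * n - r - 1}"
    proof
      fix x assume "x \<in> (\<Union>j\<in>J. B j)"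
      then obtain j where "j < n" "card (B j) = 1" "x \<in> B j" unfolding J_def by blast
      moreover from \<open>card (B j) = 1\<close> obtain e where "B j = {e}" by (rule card_1_singletonE)
      ultimately show "x \<in> {..<2 * n - r - 1}" using singleton by auto
    qed
  qed simp
  finally have J_small: "card J \<le> 2 * n - r - 1" by simp
  have "(\<Sum>j<n. 2::nat) \<le> (\<Sum>j<n. card (B j) + of_bool (j \<in> J))"
  proof (rule sum_mono)
    fix j assume "j \<in> {..<n}"
    then have "1 \<le> card (B j)" using nonempty finB by (simp add: Suc_le_eq card_gt_0_iff)
    then show "2 \<le> card (B j) + of_bool (j \<in> J)" unfolding J_def using \<open>j \<in> {..<n}\<close> by auto
  qed
  also have "\<dots> = r + card J"
  proof -
    have "{..<n} \<inter> {j. j \<in> J} = J" unfolding J_def by auto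
    then show ?thesis using card_allocation_of[OF B] by (simp add: sum.distrib)
  qed
  finally show False using J_small r by simp
qed

lemma cheapest_bundle_plus_chore_le:
  fixes v :: "nat \<Rightarrow> real"
  assumes n: "1 \<le> n" and r: "r < m" and v0: "\<forall>e<m. 0 \<le> v e"
    and dec: "\<And>j k. j \<le> k \<Longrightarrow> k < m \<Longrightarrow> v k \<le> v j"
    and B: "allocation_of n B {..<r}"
    and cheapest: "\<And>j. j < n \<Longrightarrow> cost v (B i) \<le> cost v (B j)"
  shows "cost v (B i) + v r \<le> (4 * real n - 1) / (3 * real n) * APS n m v"
proof -
  have chore_le: "v r \<le> APS n m v" by (rule APS_ge_chore[OF n r v0])
  have "1 \<le> (4 * real n - 1) / (3 * real n)" using n by (simp add: field_simps)
  then have APS_le: "APS n m v \<le> (4 * real n - 1) / (3 * real n) * APS n m v"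
    using mult_right_mono[of 1 _ "APS n m v"] chore_le v0 r by fastforce
  have small_bundle: "\<exists>j<n. B j = {} \<or> (\<exists>e. B j = {e} \<and> 2 * n - r - 1 \<le> e \<and> e < r)"
    if "r < 2 * n"
    using allocation_has_small_bundle[OF B that] allocation_of_subset[OF B] by blast
  consider (few) "r < n"
    | (triple) "3 * v r \<le> APS n m v"
    | (pair) "n \<le> r" "r < 2 * n" "v (2 * n - r - 1) + v r \<le> APS n m v"
    using APS_ge_triple_or_pair[OF n _ r v0 dec] by force
  then show ?thesis
  proof cases
    case few
    then obtain j where "j < n" "B j = {}" using small_bundle by force
    then have "cost v (B i) \<le> 0" using cheapest by (force simp: cost_def)
    then show ?thesis using chore_le APS_le by linarith
  next
    case triple
    have "real n * cost v (B i) \<le> (\<Sum>j<n. cost v (B j))"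
      using sum_mono[of "{..<n}" "\<lambda>_. cost v (B i)"] cheapest by simp
    also have "\<dots> = cost v {..<Suc r} - v r"
      using sum_allocation_of[OF B, of v] by (simp add: cost_def)
    also have "cost v {..<Suc r} \<le> cost v {..<m}" using r v0 by (intro cost_mono) auto
    also have "\<dots> \<le> real n * APS n m v" using APS_ge_average[OF n _ v0] r by simp
    finally have "real n * cost v (B i) + v r \<le> real n * APS n m v" by simp
    moreover have "(real n - 1) * (3 * v r) \<le> (real n - 1) * APS n m v"
      using triple n by (intro mult_left_mono) auto
    ultimately have "3 * real n * (cost v (B i) + v r) \<le> (4 * real n - 1) * APS n m v"
      by (simp add: algebra_simps)
    then show ?thesis using n by (simp add: field_simps)
  next
    case pair
    then obtain j where j: "j < n" and "B j = {} \<or> (\<exists>e. B j = {e} \<and> 2 * n - r - 1 \<le> e \<and> e < r)"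
      using small_bundle by blast
    then have "cost v (B j) \<le> v (2 * n - r - 1)"
      using v0 dec r pair by (auto simp: cost_def)
    then show ?thesis using cheapest[OF j] pair(3) APS_le by linarith
  qed
qed

lemma mod_succ_inj: "t < (L::nat) \<Longrightarrow> s < L \<Longrightarrow> (t + 1) mod L = (s + 1) mod L \<Longrightarrow> t = s"
  by (auto simp: mod_Suc split: if_splits)

definition cycle_succ :: "nat list \<Rightarrow> nat \<Rightarrow> nat" where
  "cycle_succ cyc a = (if a \<in> set cyc
     then cyc ! (((THE t. t < length cyc \<and> cyc ! t = a) + 1) mod length cyc) else a)"

lemma rotate_along_eq_comp: "rotate_along cyc B = B \<circ> cycle_succ cyc"
  by (rule ext) (simp add: rotate_along_def cycle_succ_def)

lemma cycle_succ_nth: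
  assumes cyc: "distinct cyc" and t: "t < length cyc"
  shows "cycle_succ cyc (cyc ! t) = cyc ! ((t + 1) mod length cyc)"
proof -
  have "(THE s. s < length cyc \<and> cyc ! s = cyc ! t) = t"
    using cyc t by (intro the_equality) (auto simp: nth_eq_iff_index_eq)
  then show ?thesis using t unfolding cycle_succ_def by simp
qed

lemma cycle_succ_in_set: "a \<in> set cyc \<Longrightarrow> cycle_succ cyc a \<in> set cyc"
  unfolding cycle_succ_def by (auto intro!: nth_mem dest: length_pos_if_in_set)

lemma inj_cycle_succ:
  assumes cyc: "distinct cyc"
  shows "inj (cycle_succ cyc)"
proof (rule injI)
  fix a b assume eq: "cycle_succ cyc a = cycle_succ cyc b"
  show "a = b"
  proof (cases "a \<in> set cyc \<and> b \<in> set cyc")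
    case True
    then obtain t s where ts: "t < length cyc" "s < length cyc" "a = cyc ! t" "b = cyc ! s"
      by (auto simp: in_set_conv_nth)
    then have "cyc ! ((t + 1) mod length cyc) = cyc ! ((s + 1) mod length cyc)"
      using eq cycle_succ_nth[OF cyc] by simp
    moreover have "0 < length cyc" using ts(1) by linarith
    ultimately have "(t + 1) mod length cyc = (s + 1) mod length cyc"
      using nth_eq_iff_index_eq[OF cyc, of "(t + 1) mod length cyc" "(s + 1) mod length cyc"] by simp
    then show ?thesis using ts mod_succ_inj by blast
  next
    case False
    then show ?thesis using eq cycle_succ_in_set unfolding cycle_succ_def by metis
  qed
qed

lemma bij_betw_cycle_succ:
  assumes "distinct cyc" "set cyc \<subseteq> A" "finite A"
  shows "bij_betw (cycle_succ cyc) A A"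
proof -
  have "cycle_succ cyc ` A \<subseteq> A"
    using assms(2) cycle_succ_in_set unfolding cycle_succ_def by auto
  moreover have "inj_on (cycle_succ cyc) A"
    using inj_cycle_succ[OF assms(1)] by (rule inj_on_subset) simp
  ultimately show ?thesis using assms(3) by (simp add: bij_betw_def endo_inj_surj)
qed

lemma envy_cycle_envies_succ:
  assumes cyc: "envy_cycle n c B cyc" and a: "a \<in> set cyc"
  shows "envies c B a (cycle_succ cyc a)"
proof -
  obtain t where "t < length cyc" "a = cyc ! t" using a by (auto simp: in_set_conv_nth)
  then show ?thesis using cyc cycle_succ_nth unfolding envy_cycle_def by auto
qed

lemma cost_rotate_along_le:
  assumes "envy_cycle n c B cyc"
  shows "cost (c a) (rotate_along cyc B a) \<le> cost (c a) (B a)"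
  using envy_cycle_envies_succ[OF assms, of a] unfolding rotate_along_eq_comp envies_def
  by (cases "a \<in> set cyc") (auto simp: cycle_succ_def)

lemma alg_state_allocation_of:
  assumes "alg_state n m c r B"
  shows "allocation_of n B {..<r}"
  using assms
proof induction
  case init
  show ?case by (simp add: allocation_of_empty)
next
  case (add r B i)
  then show ?case unfolding lessThan_Suc by (intro allocation_of_insert) auto
next
  case (rot r B cyc)
  then have "bij_betw (cycle_succ cyc) {..<n} {..<n}"
    by (intro bij_betw_cycle_succ) (auto simp: envy_cycle_def)
  with rot.IH show ?case unfolding rotate_along_eq_comp by (rule allocation_of_permute)
qed

lemma alg_state_cost_le:
  assumes st: "alg_state n m c r B" and n: "1 \<le> n" and m: "1 \<le> m" and i: "i < n"
    and nonneg: "\<forall>e<m. 0 \<le> c i e"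
    and dec: "\<And>j k. j \<le> k \<Longrightarrow> k < m \<Longrightarrow> c i k \<le> c i j"
  shows "cost (c i) (B i) \<le> (4 * real n - 1) / (3 * real n) * APS n m (c i)"
  using st
proof induction
  case init
  have "0 \<le> APS n m (c i)" using APS_ge_chore[OF n _ nonneg, of 0] m nonneg by force
  then show ?case using n by (simp add: cost_def)
next
  case (add r B k)
  show ?case
  proof (cases "k = i")
    case True
    have B: "allocation_of n B {..<r}" by (rule alg_state_allocation_of[OF add.hyps(1)])
    then have "finite (B i)" "r \<notin> B i" using allocation_of_subset[OF B i] finite_subset by auto
    then have "cost (c i) (insert r (B i)) = cost (c i) (B i) + c i r" by (simp add: cost_def)
    also have "\<dots> \<le> (4 * real n - 1) / (3 * real n) * APS n m (c i)"
      using cheapest_bundle_plus_chore_le[OF n add.hyps(2) nonneg dec B] add.hyps(5) True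
      by (simp add: envies_def not_less)
    finally show ?thesis using True by simp
  qed (use add.IH in simp)
next
  case (rot r B cyc)
  then show ?case using cost_rotate_along_le[OF rot.hyps(2), of i] by linarith
qed

theorem lemma7:
  fixes n m :: nat and c :: "nat \<Rightarrow> nat \<Rightarrow> real" and B :: "nat \<Rightarrow> nat set"
  assumes "n \<ge> 1" and "m \<ge> 1"
    and nonneg: "\<forall>i<n. \<forall>e<m. c i e \<ge> 0"
    and ident_ordered: "\<forall>i<n. \<forall>j k. j < k \<and> k < m \<longrightarrow> c i j \<ge> c i k"
    and out: "algchores_output n m c B"
  shows "\<forall>i<n. cost (c i) (B i) \<le> (4 * real n - 1) / (3 * real n) * APS n m (c i)"
proof (intro allI impI)
  fix i assume i: "i < n"
  have "c i k \<le> c i j" if "j \<le> k" "k < m" for j k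
    using ident_ordered i that by (cases "j = k") auto
  moreover have "alg_state n m c m B" using out unfolding algchores_output_def by simp
  ultimately show "cost (c i) (B i) \<le> (4 * real n - 1) / (3 * real n) * APS n m (c i)"
    using alg_state_cost_le assms(1,2) i nonneg by blast
qed

end
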